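(* Let $F(a,b,c,d,A)=-2(a+c)-2\bigl[(ac+bd)\cos2A+(bc-ad)\sin2A\bigr]+a^2+b^2+c^2+d^2+1$ and $\mathbb S=F^{-1}(0)\subset\mathbb R^5$. Then $\mathbb S$ has singular points with $A=\pm\pi/2$.
   Context: Here $X_1=a+bi$, $X_2=c+di$ and $F=0$ is $-2\,\mathrm{Re}(X_1+X_2)-2\,\mathrm{Re}(X_1\overline{X}_2e^{-2iA})+|X_1|^2+|X_2|^2+1=0$ (the basic variety). A singular point of $\mathbb S$ is a point of $\mathbb S$ at which the gradient of $F$ vanishes. *)

theory Defs
  imports "HOL-Analysis.Analysis"
begin

definition F :: "real \<Rightarrow> real \<Rightarrow> real \<Rightarrow> real \<Rightarrow> real \<Rightarrow> real" where
  "F a b c d t = -2*(a+c) - 2*((a*c + b*d) * cos (2*t) + (b*c - a*d) * sin (2*t))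
                  + a^2 + b^2 + c^2 + d^2 + 1"

definition in_S :: "real \<Rightarrow> real \<Rightarrow> real \<Rightarrow> real \<Rightarrow> real \<Rightarrow> bool" where
  "in_S a b c d A \<longleftrightarrow> F a b c d A = 0"

definition singular_point :: "real \<Rightarrow> real \<Rightarrow> real \<Rightarrow> real \<Rightarrow> real \<Rightarrow> bool" where
  "singular_point a b c d A \<longleftrightarrow> in_S a b c d A \<and>
     ((\<lambda>x. F x b c d A) has_real_derivative 0) (at a) \<and>
     ((\<lambda>x. F a x c d A) has_real_derivative 0) (at b) \<and>
     ((\<lambda>x. F a b x d A) has_real_derivative 0) (at c) \<and>
     ((\<lambda>x. F a b c x A) has_real_derivative 0) (at d) \<and>
     ((\<lambda>x. F a b c d x) has_real_derivative 0) (at A)"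

end

theory Submission
  imports Defs
begin

text \<open>At \<open>X\<^sub>1 = 1, X\<^sub>2 = 0\<close> we have \<open>F = 0\<close> for every \<open>A\<close>, and all partial
  derivatives of \<open>F\<close> vanish except \<open>\<partial>F/\<partial>c = -2 - 2 cos 2A\<close> and \<open>\<partial>F/\<partial>d = 2 sin 2A\<close>;
  so the point is singular exactly when \<open>e\<^sup>-\<^sup>2\<^sup>i\<^sup>A = -1\<close>, e.g. for \<open>A = \<plusminus>\<pi>/2\<close>.\<close>

lemma sin_eq_0_if_cos_eq_minus_1:
  fixes x :: real
  assumes "cos x = -1"
  shows "sin x = 0"
  using sin_cos_squared_add[of x] assms by simp

lemma F_1_0_0_0_deriv_c:
  "((\<lambda>x. F 1 0 x 0 A) has_real_derivative (2*c - 2 - 2 * cos (2*A))) (at c)"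
  unfolding F_def by (rule derivative_eq_intros refl | simp)+

lemma singular_point_1_0_0_0_iff:
  "singular_point 1 0 0 0 A \<longleftrightarrow> cos (2*A) = -1"
proof
  assume "singular_point 1 0 0 0 A"
  then have "((\<lambda>x. F 1 0 x 0 A) has_real_derivative 0) (at 0)"
    by (simp add: singular_point_def)
  with F_1_0_0_0_deriv_c[of A 0] have "-2 - 2 * cos (2*A) = 0"
    using DERIV_unique by fastforce
  then show "cos (2*A) = -1"
    by simp
next
  assume cos: "cos (2*A) = -1"
  then have sin: "sin (2*A) = 0"
    by (rule sin_eq_0_if_cos_eq_minus_1)
  show "singular_point 1 0 0 0 A"
    unfolding singular_point_def in_S_def F_def
    using cos sin
    apply (intro conjI)
         apply simp
        apply (rule derivative_eq_intros refl | simp)+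
    done
qed

theorem proposition3p5:
  shows "(\<exists>a b c d. singular_point a b c d (pi/2)) \<and>
         (\<exists>a b c d. singular_point a b c d (-(pi/2)))"
proof -
  have "singular_point 1 0 0 0 (pi/2)" "singular_point 1 0 0 0 (-(pi/2))"
    by (simp_all add: singular_point_1_0_0_0_iff)
  then show ?thesis
    by blast
qed

end
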